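(* Let $A_1,A_2\in\mathbb{R}^{2\times2}$ be such that $\det[A_1,A_2]=0$ and $A_1-A_2$ is invertible, and suppose $A_1$ has non-real eigenvalues. Then $A_2$ either has non-real eigenvalues or is a scalar matrix, and $B:=(A_1A_2+\mathbb{I})(A_1-A_2)^{-1}$ has complex conjugate eigenvalues (i.e. its spectrum is of the form $\{\mu,\overline{\mu}\}$).
   Context: $[A,B]=AB-BA$; $\mathbb{I}$ is the $2\times 2$ identity matrix. *)

theory Defs
  imports "HOL-Analysis.Analysis"
begin

definition cmat :: "real^'n^'m \<Rightarrow> complex^'n^'m" where
  "cmat A = (\<chi> i j. complex_of_real (A $ i $ j))"

definition cspectrum :: "real^'n^'n \<Rightarrow> complex set" where
  "cspectrum A = {z. det (cmat A - mat z) = 0}"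

definition commutator :: "real^'n^'n \<Rightarrow> real^'n^'n \<Rightarrow> real^'n^'n" where
  "commutator A B = A ** B - B ** A"

end

theory Submission
  imports Defs
begin

text \<open>Write \<open>A\<^sub>1 = (a b; c d)\<close> with discriminant \<open>D = (a - d)\<^sup>2 + 4bc\<close>; non-real eigenvalues mean
  \<open>D < 0\<close>, hence \<open>b \<noteq> 0\<close>. Up to the factor \<open>-4b\<^sup>2\<close>, \<open>det [A\<^sub>1, A\<^sub>2]\<close> is a binary quadratic form of
  discriminant \<open>D\<close> in two linear expressions in the entries of \<open>A\<^sub>2\<close>; being definite, it vanishes
  only when \<open>A\<^sub>1\<close> and \<open>A\<^sub>2\<close> commute. Since \<open>b \<noteq> 0\<close>, every matrix commuting with \<open>A\<^sub>1\<close> has the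
  form \<open>\<alpha> A\<^sub>1 + \<beta> I\<close>, whose discriminant is \<open>\<alpha>\<^sup>2 D \<le> 0\<close>. This applies to \<open>A\<^sub>2\<close> and to \<open>B\<close>, which
  is built from \<open>A\<^sub>1\<close> and \<open>A\<^sub>2\<close> by sums, products and inversion; a real \<open>2\<times>2\<close> matrix with
  non-positive discriminant has spectrum \<open>{\<mu>, \<mu>\<^sup>*}\<close>.\<close>

lemma matrix_add_rdistrib:
  fixes A B C :: "'a::semiring_1^'n^'n"
  shows "(B + C) ** A = B ** A + C ** A"
  by (vector matrix_matrix_mult_def sum.distrib[symmetric] field_simps)

lemma matrix_diff_ldistrib:
  fixes A B C :: "'a::ring_1^'n^'n"
  shows "A ** (B - C) = A ** B - A ** C"
  by (vector matrix_matrix_mult_def sum_subtractf[symmetric] field_simps)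

lemma matrix_diff_rdistrib:
  fixes A B C :: "'a::ring_1^'n^'n"
  shows "(B - C) ** A = B ** A - C ** A"
  by (vector matrix_matrix_mult_def sum_subtractf[symmetric] field_simps)

lemma invertible_matrix_inv:
  assumes "invertible N"
  shows "N ** matrix_inv N = mat 1" "matrix_inv N ** N = mat 1"
  using someI_ex[OF assms[unfolded invertible_def]] unfolding matrix_inv_def by blast+

lemma commute_matrix_add:
  fixes A X Y :: "'a::semiring_1^'n^'n"
  assumes "A ** X = X ** A" "A ** Y = Y ** A"
  shows "A ** (X + Y) = (X + Y) ** A"
  by (simp add: matrix_add_ldistrib matrix_add_rdistrib assms)

lemma commute_matrix_diff:
  fixes A X Y :: "'a::ring_1^'n^'n"
  assumes "A ** X = X ** A" "A ** Y = Y ** A"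
  shows "A ** (X - Y) = (X - Y) ** A"
  by (simp add: matrix_diff_ldistrib matrix_diff_rdistrib assms)

lemma commute_matrix_mult:
  fixes A X Y :: "'a::semiring_1^'n^'n"
  assumes "A ** X = X ** A" "A ** Y = Y ** A"
  shows "A ** (X ** Y) = (X ** Y) ** A"
  by (metis assms matrix_mul_assoc)

lemma commute_matrix_inv:
  fixes A N :: "'a::semiring_1^'n^'n"
  assumes "invertible N" "A ** N = N ** A"
  shows "A ** matrix_inv N = matrix_inv N ** A"
proof -
  let ?N' = "matrix_inv N"
  have "?N' ** A = ?N' ** A ** (N ** ?N')"
    by (simp add: invertible_matrix_inv[OF assms(1)])
  also have "\<dots> = ?N' ** (A ** N) ** ?N'"
    by (simp add: matrix_mul_assoc)
  also have "\<dots> = (?N' ** N) ** A ** ?N'"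
    by (simp add: assms(2) matrix_mul_assoc)
  also have "\<dots> = A ** ?N'"
    by (simp add: invertible_matrix_inv[OF assms(1)] matrix_mul_assoc)
  finally show ?thesis by simp
qed

lemma matrix_matrix_mult_2:
  fixes A B :: "real^2^2"
  shows "(A ** B) $ i $ j = A$i$1 * B$1$j + A$i$2 * B$2$j"
  by (simp add: matrix_matrix_mult_def sum_2)

lemma matrix_eq_2_iff:
  fixes A B :: "real^2^2"
  shows "A = B \<longleftrightarrow> A$1$1 = B$1$1 \<and> A$1$2 = B$1$2 \<and> A$2$1 = B$2$1 \<and> A$2$2 = B$2$2"
  by (auto simp: vec_eq_iff forall_2)

text \<open>The discriminant \<open>tr\<^sup>2 - 4 det\<close> of the characteristic polynomial.\<close>
definition discriminant :: "real^2^2 \<Rightarrow> real" where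
  "discriminant M = (M$1$1 - M$2$2)\<^sup>2 + 4 * M$1$2 * M$2$1"

lemma det_cmat_minus_mat_2:
  fixes M :: "real^2^2"
  shows "det (cmat M - mat z)
    = (of_real (M$1$1) - z) * (of_real (M$2$2) - z) - of_real (M$1$2) * of_real (M$2$1)"
  by (simp add: det_2 cmat_def mat_def)

lemma discriminant_neg_if_nonreal_eigenvalue:
  assumes "z \<in> cspectrum M" "Im z \<noteq> 0"
  shows "discriminant M < 0"
proof -
  obtain x y where z: "z = Complex x y" by (cases z)
  let ?a = "M$1$1" and ?b = "M$1$2" and ?c = "M$2$1" and ?d = "M$2$2"
  have char: "(of_real ?a - z) * (of_real ?d - z) - of_real ?b * of_real ?c = 0"
    using assms(1) by (simp add: cspectrum_def det_cmat_minus_mat_2)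
  have re: "(?a - x) * (?d - x) - y\<^sup>2 - ?b * ?c = 0"
    using arg_cong[OF char, of Re] by (simp add: z power2_eq_square)
  have im: "y * (2*x - ?a - ?d) = 0"
    using arg_cong[OF char, of Im] by (simp add: z algebra_simps)
  have "y \<noteq> 0" using assms(2) z by simp
  with im have d: "?d = 2*x - ?a" by simp
  from re have "discriminant M = - 4 * y\<^sup>2"
    unfolding discriminant_def d by (simp add: algebra_simps power2_eq_square)
  with \<open>y \<noteq> 0\<close> show ?thesis by simp
qed

lemma cspectrum_eq_conjugate_pair:
  fixes M :: "real^2^2"
  assumes "discriminant M \<le> 0"
  defines "\<mu> \<equiv> Complex ((M$1$1 + M$2$2) / 2) (sqrt (- discriminant M) / 2)"
  shows "cspectrum M = {\<mu>, cnj \<mu>}"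
proof -
  let ?a = "M$1$1" and ?b = "M$1$2" and ?c = "M$2$1" and ?d = "M$2$2"
  define p where "p = (?a + ?d) / 2"
  define q where "q = sqrt (- discriminant M) / 2"
  have "q\<^sup>2 = - discriminant M / 4"
    using assms(1) unfolding q_def by (simp add: power_divide)
  then have norm_mu: "p\<^sup>2 + q\<^sup>2 = ?a * ?d - ?b * ?c"
    unfolding p_def discriminant_def by (simp add: power2_eq_square field_simps)
  have mu: "\<mu> = of_real p + \<i> * of_real q" "cnj \<mu> = of_real p - \<i> * of_real q"
    unfolding \<mu>_def p_def q_def by (simp_all add: complex_eq_iff)
  have "det (cmat M - mat z) = (z - \<mu>) * (z - cnj \<mu>)" for z
  proof -
    have "(z - \<mu>) * (z - cnj \<mu>) = z\<^sup>2 - 2 * of_real p * z + of_real (p\<^sup>2 + q\<^sup>2)"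
      unfolding mu by (simp add: algebra_simps power2_eq_square)
    also have "\<dots> = z\<^sup>2 - of_real (?a + ?d) * z + of_real (?a * ?d - ?b * ?c)"
      by (subst norm_mu) (simp add: p_def)
    also have "\<dots> = det (cmat M - mat z)"
      unfolding det_cmat_minus_mat_2 by (simp add: algebra_simps power2_eq_square)
    finally show ?thesis by simp
  qed
  then show ?thesis unfolding cspectrum_def by auto
qed

lemma nonreal_eigenvalue_if_discriminant_neg:
  assumes "discriminant M < 0"
  shows "\<exists>z\<in>cspectrum M. Im z \<noteq> 0"
  using cspectrum_eq_conjugate_pair[of M] assms by auto

lemma det_commutator_2:
  fixes A B :: "real^2^2"
  defines "u \<equiv> A$1$2 * (B$1$1 - B$2$2) - B$1$2 * (A$1$1 - A$2$2)"
    and "v \<equiv> A$1$2 * B$2$1 - B$1$2 * A$2$1"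
  shows "- 4 * (A$1$2)\<^sup>2 * det (commutator A B)
    = (2 * A$1$2 * v + (A$1$1 - A$2$2) * u)\<^sup>2 - discriminant A * u\<^sup>2"
  unfolding u_def v_def discriminant_def commutator_def det_2
  by (simp add: matrix_matrix_mult_2 algebra_simps power2_eq_square)

lemma commute_if_det_commutator_eq_0:
  fixes A B :: "real^2^2"
  assumes "det (commutator A B) = 0" "discriminant A < 0"
  shows "A ** B = B ** A"
proof -
  let ?a = "A$1$1" and ?b = "A$1$2" and ?c = "A$2$1" and ?d = "A$2$2"
  define u where "u = ?b * (B$1$1 - B$2$2) - B$1$2 * (?a - ?d)"
  define v where "v = ?b * B$2$1 - B$1$2 * ?c"
  have "?b \<noteq> 0" using assms(2) unfolding discriminant_def by auto
  have "(2 * ?b * v + (?a - ?d) * u)\<^sup>2 + (- discriminant A) * u\<^sup>2 = 0"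
    using det_commutator_2[of A B] assms(1) unfolding u_def v_def by simp
  moreover have "0 \<le> (- discriminant A) * u\<^sup>2"
    using assms(2) by (intro mult_nonneg_nonneg) simp_all
  ultimately have "u\<^sup>2 = 0" "(2 * ?b * v + (?a - ?d) * u)\<^sup>2 = 0"
    using assms(2) by (smt (verit) zero_le_power2 mult_pos_pos)+
  with \<open>?b \<noteq> 0\<close> have "u = 0" "v = 0" by simp_all
  have "?b * ((A ** B)$2$1 - (B ** A)$2$1) = ?c * u - (?a - ?d) * v"
    unfolding u_def v_def matrix_matrix_mult_2 by (simp add: algebra_simps)
  with \<open>u = 0\<close> \<open>v = 0\<close> \<open>?b \<noteq> 0\<close> have "(A ** B)$2$1 = (B ** A)$2$1" by simp
  with \<open>u = 0\<close> \<open>v = 0\<close> show ?thesis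
    unfolding matrix_eq_2_iff u_def v_def by (simp add: matrix_matrix_mult_2 algebra_simps)
qed

lemma commute_imp_affine:
  fixes A M :: "real^2^2"
  assumes "A ** M = M ** A" "A$1$2 \<noteq> 0"
  obtains \<alpha> \<beta> where "M = \<alpha> *\<^sub>R A + mat \<beta>"
proof
  let ?a = "A$1$1" and ?b = "A$1$2" and ?c = "A$2$1" and ?d = "A$2$2"
  define \<alpha> where "\<alpha> = M$1$2 / ?b"
  have "(A ** M)$1$1 = (M ** A)$1$1" "(A ** M)$1$2 = (M ** A)$1$2"
    using assms(1) by simp_all
  then have "?b * M$2$1 = M$1$2 * ?c" "(M$1$1 - M$2$2) * ?b = M$1$2 * (?a - ?d)"
    unfolding matrix_matrix_mult_2 by (simp_all add: algebra_simps)
  then have "M$2$1 = \<alpha> * ?c" "M$1$1 - M$2$2 = \<alpha> * (?a - ?d)" "M$1$2 = \<alpha> * ?b"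
    using assms(2) unfolding \<alpha>_def by (simp_all add: field_simps)
  then show "M = \<alpha> *\<^sub>R A + mat (M$2$2 - \<alpha> * ?d)"
    unfolding matrix_eq_2_iff by (simp add: mat_def algebra_simps)
qed

lemma discriminant_affine:
  "discriminant (\<alpha> *\<^sub>R A + mat \<beta>) = \<alpha>\<^sup>2 * discriminant A"
  by (simp add: discriminant_def mat_def algebra_simps power2_eq_square)

theorem lemma2p9:
  fixes A1 A2 :: "real^2^2"
  assumes "det (commutator A1 A2) = 0"
    and "invertible (A1 - A2)"
    and "\<exists>z\<in>cspectrum A1. Im z \<noteq> 0"
  shows "((\<exists>z\<in>cspectrum A2. Im z \<noteq> 0) \<or> (\<exists>c::real. A2 = mat c))
    \<and> (\<exists>\<mu>. cspectrum ((A1 ** A2 + mat 1) ** matrix_inv (A1 - A2)) = {\<mu>, cnj \<mu>})"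
proof
  have D: "discriminant A1 < 0"
    using assms(3) discriminant_neg_if_nonreal_eigenvalue by blast
  then have b: "A1$1$2 \<noteq> 0" unfolding discriminant_def by auto
  have comm: "A1 ** A2 = A2 ** A1"
    using commute_if_det_commutator_eq_0[OF assms(1) D] .
  obtain \<alpha> \<beta> where A2: "A2 = \<alpha> *\<^sub>R A1 + mat \<beta>"
    using commute_imp_affine[OF comm b] .
  show "(\<exists>z\<in>cspectrum A2. Im z \<noteq> 0) \<or> (\<exists>c. A2 = mat c)"
  proof (cases "\<alpha> = 0")
    case True
    then show ?thesis using A2 by auto
  next
    case False
    then have "discriminant A2 < 0" using A2 D by (simp add: discriminant_affine mult_pos_neg)
    then show ?thesis using nonreal_eigenvalue_if_discriminant_neg by blast
  qed
  let ?B = "(A1 ** A2 + mat 1) ** matrix_inv (A1 - A2)"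
  have "A1 ** ?B = ?B ** A1"
    by (intro commute_matrix_mult commute_matrix_add commute_matrix_diff commute_matrix_inv
        assms(2) comm refl) simp
  then obtain \<alpha>' \<beta>' where "?B = \<alpha>' *\<^sub>R A1 + mat \<beta>'"
    using commute_imp_affine b by blast
  then have "discriminant ?B \<le> 0" using D by (simp add: discriminant_affine mult_nonneg_nonpos)
  then show "\<exists>\<mu>. cspectrum ?B = {\<mu>, cnj \<mu>}" using cspectrum_eq_conjugate_pair by blast
qed

end
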